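(* For every non-initial valid composite state $\sigma \in S_V^\ast = S_V \setminus S_0$ of the composition $\mathcal{M}uddy\mathcal{P}uzzle$, the predicate $\mathbf{consistent}(\sigma)$ holds.
   Context: Fix $n \ge 1$ children indexed $1,\dots,n$. A message is a triple $\langle j, r, s\rangle$ with $j \in \{1,\dots,n\}$ (the sender), $r \in \mathbb{N}$ (a round number) and $s \in \{u,m,c\}$ (epistemic status: $u$ = "does not know own status", $m$ = "knows they are muddy", $c$ = "knows they are clean"); $\bot$ denotes "no message". Child $i$ is a VLSM $\mathcal{C}_i$ with labels $\{\mathit{init},\mathit{emit},\mathit{receive}\}$, no initial messages, initial states $\langle \mathit{Obs}\rangle$ with $\mathit{Obs}\subseteq\{1,\dots,n\}$, and running states $\langle \mathit{Obs}, r, s\rangle$ with $\mathit{Obs}\subseteq\{1,\dots,n\}$, $r\in\mathbb{N}$, $s\in\{u,m,c\}$; $\mathit{Obs}(\cdot)$ denotes the observation set of either kind of state. Transitions $\tau_i$ and local validity $\beta_i$: - init: enabled only on an initial state $\langle\mathit{Obs}\rangle$ with input $\bot$; goes to $\langle \mathit{Obs},0,u\rangle$ if $\mathit{Obs}\ne\emptyset$ and to $\langle\mathit{Obs},0,m\rangle$ if $\mathit{Obs}=\emptyset$; output $\bot$. - emit: enabled only on a running state $\langle\mathit{Obs},r,s\rangle$ with input $\bot$; state unchanged, output $\langle i,r,s\rangle$. - receive: on a running state $\langle\mathit{Obs},r,s\rangle$ with input message $\langle j,r',s'\rangle$, output $\bot$, new state given by the first applicable case: (R1) $s\in\{m,c\}$: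 unchanged. Otherwise $s=u$ and: (R2) $s'=c$, $j\notin\mathit{Obs}$, $r'=|\mathit{Obs}|$: $\langle\mathit{Obs},r',c\rangle$; (R3) $s'=c$, $j\notin\mathit{Obs}$, $r'=|\mathit{Obs}|+1$: $\langle\mathit{Obs},r'-1,m\rangle$; (R4) $s'=m$, $j\in\mathit{Obs}$, $r'=|\mathit{Obs}|$: $\langle\mathit{Obs},r',m\rangle$; (R5) $s'=m$, $j\in\mathit{Obs}$, $r'=|\mathit{Obs}|-1$: $\langle\mathit{Obs},r'+1,c\rangle$; (R6) $s'=u$, $j\in\mathit{Obs}$, $r'<r$: unchanged; (R7) $s'=u$, $j\in\mathit{Obs}$, $r\le r'<|\mathit{Obs}|-1$: $\langle\mathit{Obs},r'+1,u\rangle$; (R8) $s'=u$, $j\in\mathit{Obs}$, $r'=|\mathit{Obs}|-1$: $\langle\mathit{Obs},r'+1,m\rangle$; (R9) $s'=u$, $j\notin\mathit{Obs}$, $r'\le r$: unchanged; (R10) $s'=u$, $j\notin\mathit{Obs}$, $r<r'<|\mathit{Obs}|$: $\langle\mathit{Obs},r',u\rangle$; (R11) $s'=u$, $j\notin\mathit{Obs}$, $r'=|\mathit{Obs}|$: $\langle\mathit{Obs},r',m\rangle$. $\beta_i$ for receive holds exactly when one of (R1)–(R11) applies. Composition $\mathcal{M}uddy\mathcal{P}uzzle=(\mathcal{C}_1+\dots+\mathcal{C}_n)|_\varphi$: composite states are tuples $\sigma=(\sigma_1,\dots,\sigma_n)$; composite initial states ($S_0$) are those with every component initial; labels are pairs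 $(i,l)$; transition $(i,l)$ with input $\mu$ applies $\tau_i(l,\sigma_i,\mu)$ to component $i$, leaves the others unchanged, and is allowed iff $\beta_i(l,\sigma_i,\mu)\wedge\varphi((i,l),\sigma,\mu)$. For a composite state $\sigma$ let $M=\bigcup_{i}\mathit{Obs}(\sigma_i)$; $\mathbf{consistent}(\sigma)$ means $M\ne\emptyset$ and $\mathit{Obs}(\sigma_i)=M\setminus\{i\}$ for all $i$. The composition constraint: $\varphi((i,\mathit{init}),\sigma,\mu)=\mathbf{consistent}(\sigma)$; $\varphi((i,\mathit{emit}),\sigma,\mu)=\text{true}$; $\varphi((i,\mathit{receive}),\sigma,\langle j,r',s'\rangle)$ holds iff $\sigma_j$ is a running state $\langle \mathit{Obs}_j,r_j,s_j\rangle$ and $(s'=s_j\wedge r'=r_j)\vee(s'=u\wedge r'<r_j)$. Validity (VLSM sense): a transition is constrained if its input satisfies the constraint. Valid traces and valid messages are defined by simultaneous induction: a valid trace is a finite sequence of constrained transitions starting in a composite initial state in which every input message is either $\bot$ or a valid message; a valid message is one output by some transition of some valid trace. A valid state is one reachable by a valid trace; $S_V$ is the set of valid states and $S_V^\ast=S_V\setminus S_0$. *)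

theory Defs
  imports Main
begin

text \<open>Epistemic status: U = does not know own status, Mu = knows muddy, Cl = knows clean.\<close>
datatype status = U | Mu | Cl

text \<open>A message (j, r, s): sender j, round r, status s.  No message (bottom) is None.\<close>
type_synonym msg = "nat \<times> nat \<times> status"

datatype cstate = Initial "nat set" | Running "nat set" nat status

datatype label = Init | Emit | Receive

fun obs :: "cstate \<Rightarrow> nat set" where
  "obs (Initial Ob) = Ob"
| "obs (Running Ob r s) = Ob"

fun is_initial :: "cstate \<Rightarrow> bool" where
  "is_initial (Initial Ob) = True"
| "is_initial (Running Ob r s) = False"

text \<open>Receive rules R1--R11 (first applicable case); None iff no case applies (beta false).
  The condition r' = |Obs| - 1 is written r' + 1 = |Obs| (rounds are naturals).\<close>
definition receive_step :: "nat set \<Rightarrow> nat \<Rightarrow> status \<Rightarrow> msg \<Rightarrow> cstate option" where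
  "receive_step Ob r s m = (case m of (j, r', s') \<Rightarrow>
     if s = Mu \<or> s = Cl then Some (Running Ob r s)
     else if s' = Cl \<and> j \<notin> Ob \<and> r' = card Ob then Some (Running Ob r' Cl)
     else if s' = Cl \<and> j \<notin> Ob \<and> r' = card Ob + 1 then Some (Running Ob (r' - 1) Mu)
     else if s' = Mu \<and> j \<in> Ob \<and> r' = card Ob then Some (Running Ob r' Mu)
     else if s' = Mu \<and> j \<in> Ob \<and> r' + 1 = card Ob then Some (Running Ob (r' + 1) Cl)
     else if s' = U \<and> j \<in> Ob \<and> r' < r then Some (Running Ob r s)
     else if s' = U \<and> j \<in> Ob \<and> r \<le> r' \<and> r' + 1 < card Ob then Some (Running Ob (r' + 1) U)
     else if s' = U \<and> j \<in> Ob \<and> r' + 1 = card Ob then Some (Running Ob (r' + 1) Mu)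
     else if s' = U \<and> j \<notin> Ob \<and> r' \<le> r then Some (Running Ob r s)
     else if s' = U \<and> j \<notin> Ob \<and> r < r' \<and> r' < card Ob then Some (Running Ob r' U)
     else if s' = U \<and> j \<notin> Ob \<and> r' = card Ob then Some (Running Ob r' Mu)
     else None)"

fun cstep :: "nat \<Rightarrow> label \<Rightarrow> cstate \<Rightarrow> msg option \<Rightarrow> (cstate \<times> msg option) option" where
  "cstep i Init (Initial Ob) None =
     Some (if Ob \<noteq> {} then Running Ob 0 U else Running Ob 0 Mu, None)"
| "cstep i Emit (Running Ob r s) None = Some (Running Ob r s, Some (i, r, s))"
| "cstep i Receive (Running Ob r s) (Some m) =
     (case receive_step Ob r s m of None \<Rightarrow> None | Some st \<Rightarrow> Some (st, None))"
| "cstep i l st \<mu> = None"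

text \<open>Composite states: functions from indices to component states; only indices 1..n matter,
  and (to model n-tuples) all other indices carry the fixed dummy value Initial {}.\<close>
type_synonym cstate_comp = "nat \<Rightarrow> cstate"

definition initial_states :: "nat \<Rightarrow> cstate_comp set" where
  "initial_states n = {\<sigma>. (\<forall>i\<in>{1..n}. \<exists>Ob. Ob \<subseteq> {1..n} \<and> \<sigma> i = Initial Ob)
                         \<and> (\<forall>i. i \<notin> {1..n} \<longrightarrow> \<sigma> i = Initial {})}"

definition consistent :: "nat \<Rightarrow> cstate_comp \<Rightarrow> bool" where
  "consistent n \<sigma> = (let M = (\<Union>i\<in>{1..n}. obs (\<sigma> i)) in
     M \<noteq> {} \<and> (\<forall>i\<in>{1..n}. obs (\<sigma> i) = M - {i}))"

fun phi :: "nat \<Rightarrow> nat \<Rightarrow> label \<Rightarrow> cstate_comp \<Rightarrow> msg option \<Rightarrow> bool" where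
  "phi n i Init \<sigma> \<mu> = consistent n \<sigma>"
| "phi n i Emit \<sigma> \<mu> = True"
| "phi n i Receive \<sigma> (Some (j, r', s')) =
     (\<exists>Oj rj sj. \<sigma> j = Running Oj rj sj \<and> ((s' = sj \<and> r' = rj) \<or> (s' = U \<and> r' < rj)))"
| "phi n i Receive \<sigma> None = False"

inductive valid_state :: "nat \<Rightarrow> cstate_comp \<Rightarrow> bool"
  and valid_msg :: "nat \<Rightarrow> msg \<Rightarrow> bool"
  for n :: nat where
  vs_init: "\<sigma> \<in> initial_states n \<Longrightarrow> valid_state n \<sigma>"
| vs_step: "\<lbrakk> valid_state n \<sigma>; i \<in> {1..n};
             \<mu> = None \<or> (\<exists>m. \<mu> = Some m \<and> valid_msg n m);
             cstep i l (\<sigma> i) \<mu> = Some (st', out); phi n i l \<sigma> \<mu> \<rbrakk>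
           \<Longrightarrow> valid_state n (\<sigma>(i := st'))"
| vm_out: "\<lbrakk> valid_state n \<sigma>; i \<in> {1..n};
             \<mu> = None \<or> (\<exists>m'. \<mu> = Some m' \<and> valid_msg n m');
             cstep i l (\<sigma> i) \<mu> = Some (st', Some m); phi n i l \<sigma> \<mu> \<rbrakk>
           \<Longrightarrow> valid_msg n m"

end

theory Submission
  imports Defs
begin

text \<open>Observation sets never change, so consistency, once established, is preserved by every
  transition; and in a composite initial state the only enabled transition is an \<open>init\<close>,
  whose constraint is consistency itself.\<close>

lemma receive_step_obs: "receive_step Ob r s m = Some st \<Longrightarrow> obs st = Ob"
  unfolding receive_step_def by (cases m) (auto split: if_split_asm)

lemma cstep_obs: "cstep i l st \<mu> = Some (st', out) \<Longrightarrow> obs st' = obs st"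
  by (induction i l st \<mu> rule: cstep.induct)
     (auto split: option.splits if_splits dest: receive_step_obs)

lemma cstep_Initial_imp_Init: "cstep i l (Initial Ob) \<mu> = Some x \<Longrightarrow> l = Init"
  by (cases l; cases \<mu>) auto

lemma initial_states_Initial:
  assumes "\<sigma> \<in> initial_states n" and "i \<in> {1..n}"
  obtains Ob where "\<sigma> i = Initial Ob"
  using assms unfolding initial_states_def by blast

lemma consistent_fun_upd:
  assumes "consistent n \<sigma>" and "obs st' = obs (\<sigma> i)"
  shows "consistent n (\<sigma>(i := st'))"
proof -
  have "obs ((\<sigma>(i := st')) k) = obs (\<sigma> k)" for k
    using assms(2) by simp
  then show ?thesis
    using assms(1) unfolding consistent_def by presburger
qed

lemma valid_state_initial_or_consistent:
  "valid_state n \<sigma> \<Longrightarrow> \<sigma> \<in> initial_states n \<or> consistent n \<sigma>"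
proof (induction rule: valid_state_valid_msg.inducts(1)[where ?P2.0 = "\<lambda>_. True"])
  case (vs_step \<sigma> i \<mu> l st' out)
  have "consistent n \<sigma>"
  proof (rule ccontr)
    assume "\<not> consistent n \<sigma>"
    with vs_step.IH have "\<sigma> \<in> initial_states n" by simp
    then obtain Ob where "\<sigma> i = Initial Ob"
      using \<open>i \<in> {1..n}\<close> by (rule initial_states_Initial)
    with vs_step.hyps have "l = Init" by (metis cstep_Initial_imp_Init)
    with \<open>phi n i l \<sigma> \<mu>\<close> \<open>\<not> consistent n \<sigma>\<close> show False by simp
  qed
  moreover have "obs st' = obs (\<sigma> i)"
    using vs_step.hyps by (metis cstep_obs)
  ultimately show ?case by (blast intro: consistent_fun_upd)
qed simp_all

theorem mainTheorem1:
  fixes n :: nat and \<sigma> :: cstate_comp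
  assumes "n \<ge> 1"
    and "valid_state n \<sigma>"
    and "\<sigma> \<notin> initial_states n"
  shows "consistent n \<sigma>"
  using valid_state_initial_or_consistent[OF assms(2)] assms(3) by simp

end
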